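(* Let $n$ and $\ell$ be positive integers with $\ell$ odd such that $\Omega_\ell(n)$ is a powerful number. If $p\in P(n)$, then $\gcd(p(p-1),\ell)>1$.
   Context: A positive integer $a$ is called a powerful number if for every prime $p$, $p\mid a$ implies $p^2\mid a$. $\Omega_\ell(n)=\prod_{a=1}^{n}(a^\ell+1)$. For a positive integer $n$, $P(n)$ denotes the set of primes $p$ with $\frac{n+1}{2}<p\le n+1$. *)

theory Defs
  imports "HOL-Computational_Algebra.Primes"
begin

definition powerful :: "nat \<Rightarrow> bool" where
  "powerful a \<longleftrightarrow> a > 0 \<and> (\<forall>p. prime p \<longrightarrow> p dvd a \<longrightarrow> p^2 dvd a)"

definition Omega :: "nat \<Rightarrow> nat \<Rightarrow> nat" where
  "Omega l n = (\<Prod>a = 1..n. a ^ l + 1)"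

definition Pset :: "nat \<Rightarrow> nat set" where
  "Pset n = {p. prime p \<and> n + 1 < 2 * p \<and> p \<le> n + 1}"

end

theory Submission
  imports Defs "HOL-Number_Theory.Number_Theory"
begin

text \<open>
  Suppose \<open>p \<in> P(n)\<close> with \<open>gcd (p(p - 1), \<ell>) = 1\<close>. Since \<open>\<ell>\<close> is odd,
  \<open>(p - 1)\<^sup>\<ell> + 1 \<equiv> \<ell> p (mod p\<^sup>2)\<close>, so \<open>p\<close> divides this factor of \<open>\<Omega>\<^sub>\<ell>(n)\<close>
  exactly once. Because \<open>x \<mapsto> x\<^sup>\<ell>\<close> is a bijection modulo \<open>p\<close>, any other factor
  \<open>a\<^sup>\<ell> + 1\<close> divisible by \<open>p\<close> would have \<open>a \<equiv> -1 (mod p)\<close>, and \<open>p - 1\<close> is the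
  only such \<open>a \<le> n < 2p - 1\<close>. Hence \<open>p\<close> exactly divides \<open>\<Omega>\<^sub>\<ell>(n)\<close>, which is then not powerful.
\<close>

lemma minus_one_power_cong:
  fixes x :: int
  shows "[(x - 1) ^ k = (-1) ^ k * (1 - int k * x)] (mod x\<^sup>2)"
proof (induction k)
  case 0
  then show ?case by simp
next
  case (Suc k)
  have "[(x - 1) ^ Suc k = (-1) ^ k * (1 - int k * x) * (x - 1)] (mod x\<^sup>2)"
    using cong_mult[OF Suc cong_refl[of "x - 1"]] by (simp add: mult.commute)
  moreover have "(-1) ^ k * (1 - int k * x) * (x - 1)
      = (-1) ^ Suc k * (1 - int (Suc k) * x) + (-1) ^ k * (- int k) * x\<^sup>2"
    by (simp add: algebra_simps power2_eq_square)
  moreover have "[(-1) ^ Suc k * (1 - int (Suc k) * x) + (-1) ^ k * (- int k) * x\<^sup>2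
      = (-1) ^ Suc k * (1 - int (Suc k) * x)] (mod x\<^sup>2)"
    by (simp add: cong_iff_dvd_diff)
  ultimately show ?case
    by (metis cong_trans)
qed

lemma minus_one_odd_power_plus_one_cong:
  fixes x :: int
  assumes "odd l"
  shows "[(x - 1) ^ l + 1 = int l * x] (mod x\<^sup>2)"
proof -
  have "[(x - 1) ^ l = int l * x - 1] (mod x\<^sup>2)"
    using minus_one_power_cong[of x l] assms by simp
  then show ?thesis
    using cong_add[OF _ cong_refl[of 1]] by fastforce
qed

lemma dvd_minus_one_odd_power_plus_one:
  fixes p l :: nat
  assumes "p > 0" "odd l"
  shows "p dvd (p - 1) ^ l + 1"
proof -
  have "[(int p - 1) ^ l + 1 = int l * int p] (mod int p)"
    using minus_one_odd_power_plus_one_cong[OF assms(2), of "int p"]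
      cong_dvd_modulus[of _ _ "(int p)\<^sup>2" "int p"]
    by (simp add: power2_eq_square)
  then have "int p dvd (int p - 1) ^ l + 1"
    by (simp add: cong_dvd_iff)
  then show ?thesis
    using assms(1) by (simp add: add.commute flip: int_dvd_int_iff)
qed

lemma square_not_dvd_minus_one_odd_power_plus_one:
  fixes p l :: nat
  assumes "p > 0" "odd l" "\<not> p dvd l"
  shows "\<not> p\<^sup>2 dvd (p - 1) ^ l + 1"
proof
  assume "p\<^sup>2 dvd (p - 1) ^ l + 1"
  then have "(int p)\<^sup>2 dvd (int p - 1) ^ l + 1"
    using assms(1) by (simp add: add.commute flip: int_dvd_int_iff)
  then have "(int p)\<^sup>2 dvd int l * int p"
    using minus_one_odd_power_plus_one_cong[OF assms(2), of "int p"] cong_dvd_iff by blast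
  then have "p dvd l"
    using assms(1) by (simp add: power2_eq_square mult.commute flip: int_dvd_int_iff)
  with assms(3) show False ..
qed

text \<open>
  With \<open>l u = (p - 1) v + 1\<close> from Bezout and Fermat's little theorem,
  \<open>a \<equiv> a\<^sup>l\<^sup>u \<equiv> (-1)\<^sup>u\<close>, and \<open>u\<close> is odd as soon as \<open>p\<close> is.
\<close>
lemma prime_dvd_power_plus_one_imp_dvd_plus_one:
  fixes p l a :: nat
  assumes p: "prime p" and "l > 0" and "coprime l (p - 1)" and dvd: "p dvd a ^ l + 1"
  shows "p dvd a + 1"
proof (cases "p = 2")
  case True
  then have "odd (a ^ l)"
    using dvd by presburger
  then have "odd a"
    using \<open>l > 0\<close> by simp
  then show ?thesis
    using True by simp
next
  case False
  have "\<not> p dvd a"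
    using dvd p \<open>l > 0\<close> by (metis dvd_add_right_iff not_prime_unit prime_dvd_power_iff)
  then have fermat: "[int a ^ (p - 1) = 1] (mod int p)"
    using fermat_theorem[OF p] by (metis cong_int_iff of_nat_1 of_nat_power)
  have minus_one: "[int a ^ l = -1] (mod int p)"
    using dvd by (simp add: cong_iff_dvd_diff add.commute flip: int_dvd_int_iff)
  obtain u v where uv: "l * u = (p - 1) * v + 1"
    using bezout_nat[of l "p - 1"] \<open>l > 0\<close> \<open>coprime l (p - 1)\<close> by auto
  have "int a ^ (l * u) = (int a ^ (p - 1)) ^ v * int a"
    using uv by (simp add: power_mult power_add)
  also have "[\<dots> = int a] (mod int p)"
    using cong_mult[OF cong_pow[OF fermat, of v] cong_refl[of "int a"]] by simp
  finally have "[int a = (-1) ^ u] (mod int p)"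
    using cong_pow[OF minus_one, of u] by (metis cong_sym cong_trans power_mult)
  moreover have "odd u"
  proof -
    have "odd p"
      using prime_odd_nat[OF p] prime_ge_2_nat[OF p] False by simp
    then have "odd (l * u)"
      using uv by simp
    then show ?thesis
      by simp
  qed
  ultimately have "int p dvd int a + 1"
    by (simp add: cong_iff_dvd_diff)
  then show ?thesis
    by (metis int_dvd_int_iff of_nat_1 of_nat_add)
qed

lemma prime_not_dvd_other_factors:
  fixes p l n :: nat
  assumes p: "prime p" and "l > 0" and "coprime l (p - 1)" and "n + 1 < 2 * p"
  shows "\<not> p dvd (\<Prod>a \<in> {1..n} - {p - 1}. a ^ l + 1)"
proof
  assume "p dvd (\<Prod>a \<in> {1..n} - {p - 1}. a ^ l + 1)"
  then have "\<exists>a \<in> {1..n} - {p - 1}. p dvd a ^ l + 1"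
    using prime_dvd_prod_iff[OF finite_Diff[OF finite_atLeastAtMost] p] by iprover
  then obtain a where a: "a \<in> {1..n} - {p - 1}" and "p dvd a ^ l + 1" ..
  then have "p dvd a + 1"
    using prime_dvd_power_plus_one_imp_dvd_plus_one[OF p \<open>l > 0\<close> \<open>coprime l (p - 1)\<close>]
    by blast
  then obtain k where k: "a + 1 = p * k" ..
  have "p * k < p * 2"
    using k a \<open>n + 1 < 2 * p\<close> by (simp only: Diff_iff atLeastAtMost_iff) linarith
  then have "k = 1"
    using k by (cases k) auto
  with k a show False
    by auto
qed

theorem lemma2:
  fixes n l p :: nat
  assumes "n > 0" and "l > 0" and "odd l"
    and "powerful (Omega l n)"
    and "p \<in> Pset n"
  shows "gcd (p * (p - 1)) l > 1"
proof (rule ccontr)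
  have p: "prime p" "n + 1 < 2 * p" "p - 1 \<in> {1..n}"
    using \<open>p \<in> Pset n\<close> prime_ge_2_nat[of p] by (auto simp: Pset_def)
  assume "\<not> gcd (p * (p - 1)) l > 1"
  moreover have "gcd (p * (p - 1)) l \<noteq> 0"
    using \<open>l > 0\<close> by simp
  ultimately have "coprime (p * (p - 1)) l"
    unfolding coprime_iff_gcd_eq_1 by linarith
  then have "coprime p l" and coprime: "coprime l (p - 1)"
    by (auto simp: coprime_commute[of l])
  then have "\<not> p dvd l"
    using p(1) by (metis coprime_common_divisor dvd_refl not_prime_unit)
  define R where "R = (\<Prod>a \<in> {1..n} - {p - 1}. a ^ l + 1)"
  have Omega_split: "Omega l n = ((p - 1) ^ l + 1) * R"
    unfolding Omega_def R_def by (rule prod.remove[OF finite_atLeastAtMost p(3)])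
  have "p dvd (p - 1) ^ l + 1"
    using dvd_minus_one_odd_power_plus_one[OF prime_gt_0_nat[OF p(1)] \<open>odd l\<close>] .
  then have "p dvd Omega l n"
    unfolding Omega_split by (rule dvd_mult2)
  then have "p\<^sup>2 dvd ((p - 1) ^ l + 1) * R"
    using \<open>powerful (Omega l n)\<close> p(1) unfolding powerful_def Omega_split by blast
  moreover have "coprime (p\<^sup>2) R"
    using prime_not_dvd_other_factors[OF p(1) \<open>l > 0\<close> coprime p(2)] p(1)
    by (simp add: R_def prime_imp_coprime)
  ultimately have "p\<^sup>2 dvd (p - 1) ^ l + 1"
    using coprime_dvd_mult_left_iff by blast
  then show False
    using square_not_dvd_minus_one_odd_power_plus_one[OF prime_gt_0_nat[OF p(1)] \<open>odd l\<close>
        \<open>\<not> p dvd l\<close>] by contradiction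
qed

end
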